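(* Let $d\ge 1$ and let $\beta=(\beta_1,\ldots,\beta_{d+1}) \in \mathbb{R}^{d+1}$ satisfy $\beta_1 \ge \beta_2 \ge \cdots \ge \beta_{d+1} \ge 0$, $\beta_1+\cdots+\beta_{d+1}=1$, and, for every $t \in \{1,\dots,d\}$, the inequality \[ \mathrm{PS}(t):\quad \prod_{i=1}^t (\beta_i - \beta_{d+1}) \le \sum_{j=t+1}^{d+1} (\beta_j - \beta_{d+1}) + (d+1)\beta_{d+1}. \] Then: (a) $\beta_t > 0$ for every $t \in \{1,\dots,d+1\}$; (b) for every $t \in \{1,\dots,d\}$, at least one of the inequalities $\beta_t \ge \beta_{t+1}$ and $\mathrm{PS}(t)$ is strict; (c) if for some $\ell \in \{1,\dots,d\}$ the inequality $\mathrm{PS}(i)$ holds with equality for every $i \in \{1,\dots,\ell\}$, then $\beta_i = \frac{1}{s_i} + \beta_{d+1}$ for every $i \in \{1,\dots,\ell\}$.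
   Context: The Sylvester sequence is defined by $s_1 := 2$ and $s_i := 1 + s_1 s_2 \cdots s_{i-1}$ for $i \ge 2$. *)

theory Defs
  imports Complex_Main
begin

(* Sylvester sequence, 1-indexed: s 1 = 2, s i = 1 + s 1 * ... * s (i-1) for i >= 2.
   The value at index 0 is irrelevant (set to 2 by convention). *)
function sylvester :: "nat \<Rightarrow> nat" where
  "sylvester i = (if i \<le> 1 then 2 else 1 + (\<Prod>j\<in>{1..<i}. sylvester j))"
  by auto
termination
  by (relation "measure id") auto

definition PS :: "nat \<Rightarrow> (nat \<Rightarrow> real) \<Rightarrow> nat \<Rightarrow> bool" where
  "PS d \<beta> t \<longleftrightarrow>
     (\<Prod>i=1..t. \<beta> i - \<beta> (d+1)) \<le> (\<Sum>j=t+1..d+1. \<beta> j - \<beta> (d+1)) + real (d+1) * \<beta> (d+1)"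

definition PS_eq :: "nat \<Rightarrow> (nat \<Rightarrow> real) \<Rightarrow> nat \<Rightarrow> bool" where
  "PS_eq d \<beta> t \<longleftrightarrow>
     (\<Prod>i=1..t. \<beta> i - \<beta> (d+1)) = (\<Sum>j=t+1..d+1. \<beta> j - \<beta> (d+1)) + real (d+1) * \<beta> (d+1)"

definition PS_strict :: "nat \<Rightarrow> (nat \<Rightarrow> real) \<Rightarrow> nat \<Rightarrow> bool" where
  "PS_strict d \<beta> t \<longleftrightarrow>
     (\<Prod>i=1..t. \<beta> i - \<beta> (d+1)) < (\<Sum>j=t+1..d+1. \<beta> j - \<beta> (d+1)) + real (d+1) * \<beta> (d+1)"

lemma sylvester_1: "sylvester 1 = 2" by simp

end

theory Submission
  imports Defs
begin

text \<open>
  Write \<open>g i = \<beta> i - \<beta> (d+1)\<close> for the gaps, which are non-negative, and \<open>P t\<close>, \<open>S t\<close>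
  for the product and the sum of the first \<open>t\<close> gaps. Because the \<open>\<beta> i\<close> sum to 1, PS(t)
  says exactly \<open>P t + S t \<le> 1\<close>, with equality iff PS(t) is tight.

  (a) If \<open>\<beta> (d+1) = 0\<close>, the gaps are the \<open>\<beta> i\<close> themselves; at the last index \<open>m\<close> with
  \<open>\<beta> m > 0\<close> we get \<open>S m = 1\<close> and \<open>P m > 0\<close>, violating PS(m).
  (b) If PS(t) is tight and \<open>g (t+1) = g t\<close>, then PS(t-1) forces \<open>g t\<close> to be so large that
  PS(t+1) fails; for \<open>t = d\<close> the repeated gap is \<open>g (d+1) = 0\<close>, contradicting \<open>P d > 0\<close>.
  (c) Subtracting two consecutive tight inequalities gives \<open>g (t+1) * (P t + 1) = P t\<close>, and with
  \<open>P t = 1 / (s\<^sub>1 \<cdots> s\<^sub>t)\<close> this is the Sylvester recursion \<open>g (t+1) = 1 / s\<^sub>t\<^sub>+\<^sub>1\<close>.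
\<close>

declare sylvester.simps [simp del]

lemma real_sylvester_Suc:
  "real (sylvester (Suc n)) = 1 + (\<Prod>j=1..n. real (sylvester j))"
proof (cases n)
  case 0
  then show ?thesis by (simp add: sylvester.simps)
next
  case (Suc m)
  then have "sylvester (Suc n) = 1 + (\<Prod>j\<in>{1..<Suc n}. sylvester j)"
    by (subst sylvester.simps) simp
  then show ?thesis by (simp add: atLeastLessThanSuc_atLeastAtMost)
qed

lemma sylvester_pos: "0 < sylvester i"
  by (subst sylvester.simps) auto

lemma stepwise_antimono_on:
  fixes f :: "nat \<Rightarrow> 'a :: order"
  assumes "\<And>k. m \<le> k \<Longrightarrow> k < n \<Longrightarrow> f (Suc k) \<le> f k"
    and "m \<le> i" "i \<le> j" "j \<le> n"
  shows "f j \<le> f i"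
  using assms(3,4)
proof (induction j rule: dec_induct)
  case (step k)
  then show ?case using assms(1)[of k] assms(2) order_trans by fastforce
qed simp

definition prod_sum :: "(nat \<Rightarrow> real) \<Rightarrow> nat \<Rightarrow> real" where
  "prod_sum x t = (\<Prod>i=1..t. x i) + (\<Sum>i=1..t. x i)"

lemma prod_sum_0 [simp]: "prod_sum x 0 = 1"
  by (simp add: prod_sum_def)

lemma prod_sum_Suc:
  "prod_sum x (Suc t) = (\<Prod>i=1..t. x i) * x (Suc t) + (\<Sum>i=1..t. x i) + x (Suc t)"
  by (simp add: prod_sum_def)

lemma prod_sum_eq_one_imp_sylvester:
  fixes x :: "nat \<Rightarrow> real"
  assumes "\<And>t. 1 \<le> t \<Longrightarrow> t \<le> l \<Longrightarrow> prod_sum x t = 1"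
    and "1 \<le> i" "i \<le> l"
  shows "x i = 1 / real (sylvester i)"
proof -
  have "n \<le> l \<Longrightarrow> (\<Prod>i=1..n. x i) = 1 / (\<Prod>j=1..n. real (sylvester j))
      \<and> (1 \<le> n \<longrightarrow> x n = 1 / real (sylvester n))" for n
  proof (induction n)
    case (Suc n)
    define q where "q = (\<Prod>j=1..n. real (sylvester j))"
    have "q > 0"
      unfolding q_def using sylvester_pos by (intro prod_pos) simp
    have prod_n: "(\<Prod>i=1..n. x i) = 1 / q"
      using Suc by (simp add: q_def)
    have "prod_sum x n = 1"
      using assms(1)[of n] Suc.prems by (cases n) auto
    moreover have "prod_sum x (Suc n) = 1"
      using assms(1) Suc.prems by simp
    ultimately have "x (Suc n) * ((\<Prod>i=1..n. x i) + 1) = (\<Prod>i=1..n. x i)"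
      by (simp add: prod_sum_Suc prod_sum_def algebra_simps)
    then have "x (Suc n) * (1 / q + 1) = 1 / q"
      by (simp only: prod_n)
    with \<open>q > 0\<close> have "x (Suc n) = 1 / (1 + q)"
      by (simp add: field_simps)
    then have "x (Suc n) = 1 / real (sylvester (Suc n))"
      by (simp add: real_sylvester_Suc q_def)
    with prod_n show ?case
      by (simp add: q_def)
  qed simp
  then show ?thesis using assms(2,3) by simp
qed

lemma prod_sum_gt_one_if_repeated:
  fixes x :: "nat \<Rightarrow> real"
  assumes prod_pos: "(\<Prod>i=1..m. x i) > 0"
    and le: "prod_sum x m \<le> 1"
    and eq: "prod_sum x (Suc m) = 1"
    and repeat: "x (Suc (Suc m)) = x (Suc m)"
  shows "prod_sum x (Suc (Suc m)) > 1"
proof -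
  define p where "p = (\<Prod>i=1..m. x i)"
  define s where "s = (\<Sum>i=1..m. x i)"
  define y where "y = x (Suc m)"
  have "p > 0" using prod_pos by (simp add: p_def)
  have eq': "p * y + s + y = 1"
    using eq by (simp add: prod_sum_Suc p_def s_def y_def)
  have "p + s \<le> 1"
    using le by (simp add: prod_sum_def p_def s_def)
  with eq' have "p \<le> y * (p + 1)"
    by (simp add: algebra_simps)
  \<comment> \<open>so \<open>y \<ge> p / (p + 1)\<close>, whence \<open>p * y + 1 - p \<ge> 1 / (p + 1) > 0\<close>\<close>
  then have "p * p \<le> p * y * (p + 1)"
    using \<open>p > 0\<close> by (metis mult.assoc mult_left_mono less_imp_le)
  then have "0 < (p * y + 1 - p) * (p + 1)"
    by (simp add: algebra_simps)
  then have "0 < p * y + 1 - p"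
    using \<open>p > 0\<close> by (simp add: zero_less_mult_iff)
  moreover have "y > 0"
  proof -
    have "0 < y * (p + 1)"
      using \<open>p \<le> y * (p + 1)\<close> \<open>p > 0\<close> by linarith
    then show ?thesis
      using \<open>p > 0\<close> by (simp add: zero_less_mult_iff)
  qed
  ultimately have "0 < y * (p * y + 1 - p)"
    by simp
  moreover have "prod_sum x (Suc (Suc m)) = p * y * y + s + y + y"
    using repeat by (simp add: prod_sum_def p_def s_def y_def)
  ultimately show ?thesis
    using eq' by (simp add: algebra_simps)
qed

lemma prod_sum_gt_one_if_last_zero:
  fixes x :: "nat \<Rightarrow> real"
  assumes dec: "\<And>i. 1 \<le> i \<Longrightarrow> i < n \<Longrightarrow> x (Suc i) \<le> x i"
    and last: "x n = 0"
    and sum: "(\<Sum>i=1..n. x i) = 1"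
  shows "\<exists>t\<in>{1..<n}. prod_sum x t > 1"
proof -
  have "n \<ge> 1"
    using sum by (cases n) auto
  define m where "m = (LEAST m. x (Suc m) = 0)"
  have "x (Suc m) = 0" and "m < n"
    using LeastI[of "\<lambda>m. x (Suc m) = 0" "n - 1"] Least_le[of "\<lambda>m. x (Suc m) = 0" "n - 1"]
      last \<open>n \<ge> 1\<close> by (simp_all add: m_def)
  have nonneg: "x i \<ge> 0" if "1 \<le> i" "i \<le> n" for i
    using stepwise_antimono_on[of 1 n x i n, OF dec that] last by simp
  have pos: "x i > 0" if "1 \<le> i" "i \<le> m" for i
  proof -
    have "x (Suc (i - 1)) \<noteq> 0"
      using not_less_Least[of "i - 1" "\<lambda>m. x (Suc m) = 0"] that
      unfolding m_def[symmetric] by linarith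
    then show ?thesis
      using nonneg[of i] that \<open>m < n\<close> by simp
  qed
  have zero: "x i = 0" if "Suc m \<le> i" "i \<le> n" for i
    using stepwise_antimono_on[of 1 n x "Suc m" i, OF dec _ that] nonneg[of i] \<open>x (Suc m) = 0\<close> that by force
  have "(\<Sum>i=1..n. x i) = (\<Sum>i=1..m. x i) + (\<Sum>i=Suc m..m + (n - m). x i)"
    using sum.ub_add_nat[of 1 m x "n - m"] \<open>m < n\<close> by simp
  also have "(\<Sum>i=Suc m..m + (n - m). x i) = 0"
    using zero \<open>m < n\<close> by simp
  finally have "(\<Sum>i=1..m. x i) = 1"
    using sum by simp
  moreover have "(\<Prod>i=1..m. x i) > 0"
    using pos by (intro prod_pos) simp
  ultimately have "prod_sum x m > 1"
    by (simp add: prod_sum_def)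
  moreover have "m \<ge> 1"
    using \<open>(\<Sum>i=1..m. x i) = 1\<close> by (cases m) auto
  ultimately show ?thesis
    using \<open>m < n\<close> by auto
qed

lemma PS_rhs_eq:
  fixes \<beta> :: "nat \<Rightarrow> real"
  assumes "t \<le> d + 1"
  shows "(\<Sum>j=t+1..d+1. \<beta> j - \<beta> (d+1)) + real (d+1) * \<beta> (d+1)
    = (\<Sum>i=1..d+1. \<beta> i) - (\<Sum>i=1..t. \<beta> i - \<beta> (d+1))"
proof -
  have "(\<Sum>i=1..d+1. \<beta> i - \<beta> (d+1))
      = (\<Sum>i=1..t. \<beta> i - \<beta> (d+1)) + (\<Sum>j=t+1..d+1. \<beta> j - \<beta> (d+1))"
    using sum.ub_add_nat[of 1 t "\<lambda>i. \<beta> i - \<beta> (d+1)" "d + 1 - t"] assms by simp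
  moreover have "(\<Sum>i=1..d+1. \<beta> i - \<beta> (d+1)) = (\<Sum>i=1..d+1. \<beta> i) - real (d+1) * \<beta> (d+1)"
    by (simp add: sum_subtractf)
  ultimately show ?thesis
    by linarith
qed

context
  fixes d :: nat and \<beta> :: "nat \<Rightarrow> real"
  assumes sum1: "(\<Sum>i=1..d+1. \<beta> i) = 1"
begin

lemma PS_iff_prod_sum: "t \<le> d + 1 \<Longrightarrow> PS d \<beta> t \<longleftrightarrow> prod_sum (\<lambda>i. \<beta> i - \<beta> (d+1)) t \<le> 1"
  using PS_rhs_eq[of t d \<beta>] sum1 unfolding PS_def prod_sum_def by linarith

lemma PS_eq_iff_prod_sum: "t \<le> d + 1 \<Longrightarrow> PS_eq d \<beta> t \<longleftrightarrow> prod_sum (\<lambda>i. \<beta> i - \<beta> (d+1)) t = 1"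
  using PS_rhs_eq[of t d \<beta>] sum1 unfolding PS_eq_def prod_sum_def by linarith

lemma PS_strict_iff_prod_sum:
  "t \<le> d + 1 \<Longrightarrow> PS_strict d \<beta> t \<longleftrightarrow> prod_sum (\<lambda>i. \<beta> i - \<beta> (d+1)) t < 1"
  using PS_rhs_eq[of t d \<beta>] sum1 unfolding PS_strict_def prod_sum_def by linarith

context
  assumes mono: "\<And>i. 1 \<le> i \<Longrightarrow> i \<le> d \<Longrightarrow> \<beta> i \<ge> \<beta> (i+1)"
    and nonneg: "\<beta> (d+1) \<ge> 0"
    and ps: "\<And>t. 1 \<le> t \<Longrightarrow> t \<le> d \<Longrightarrow> PS d \<beta> t"
begin

lemma PS_antimono: "1 \<le> i \<Longrightarrow> i \<le> j \<Longrightarrow> j \<le> d + 1 \<Longrightarrow> \<beta> j \<le> \<beta> i"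
  using stepwise_antimono_on[of 1 "d+1" \<beta> i j] mono by simp

lemma PS_prod_sum_le_one: "t \<le> d \<Longrightarrow> prod_sum (\<lambda>i. \<beta> i - \<beta> (d+1)) t \<le> 1"
  using ps[of t] PS_iff_prod_sum[of t] by (cases t) auto

lemma PS_last_pos: "\<beta> (d+1) > 0"
proof (rule ccontr)
  assume "\<not> \<beta> (d+1) > 0"
  then have gaps: "(\<lambda>i. \<beta> i - \<beta> (d+1)) = \<beta>"
    using nonneg by auto
  have "\<exists>t\<in>{1..<d+1}. prod_sum \<beta> t > 1"
    using mono sum1 \<open>\<not> \<beta> (d+1) > 0\<close> nonneg
    by (intro prod_sum_gt_one_if_last_zero) auto
  then obtain t where "t \<le> d" "prod_sum \<beta> t > 1"
    by (auto simp: less_Suc_eq_le)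
  with PS_prod_sum_le_one[of t] show False
    unfolding gaps by simp
qed

lemma PS_strict_if_repeated:
  assumes "1 \<le> t" "t \<le> d" and repeat: "\<beta> (t+1) = \<beta> t"
  shows "PS_strict d \<beta> t"
proof (rule ccontr)
  define g where "g = (\<lambda>i. \<beta> i - \<beta> (d+1))"
  assume "\<not> PS_strict d \<beta> t"
  then have tight: "prod_sum g t = 1"
    using PS_prod_sum_le_one[of t] PS_strict_iff_prod_sum[of t] assms by (simp add: g_def)
  have "(\<Sum>i=1..t. g i) < 1"
  proof -
    have "(\<Sum>j=t+1..d+1. g j) + real (d+1) * \<beta> (d+1) = 1 - (\<Sum>i=1..t. g i)"
      using PS_rhs_eq[of t d \<beta>] assms(2) unfolding g_def sum1 by simp
    moreover have "(\<Sum>j=t+1..d+1. g j) \<ge> 0"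
      using PS_antimono by (intro sum_nonneg) (simp add: g_def)
    moreover have "real (d+1) * \<beta> (d+1) > 0"
      using PS_last_pos by simp
    ultimately show ?thesis
      by linarith
  qed
  with tight have "(\<Prod>i=1..t. g i) > 0"
    by (simp add: prod_sum_def)
  obtain m where t: "t = Suc m"
    using assms by (cases t) auto
  have "(\<Prod>i=1..m. g i) \<ge> 0"
    using PS_antimono assms t by (intro prod_nonneg) (simp add: g_def)
  moreover have "(\<Prod>i=1..t. g i) = (\<Prod>i=1..m. g i) * g t"
    using t by simp
  ultimately have "(\<Prod>i=1..m. g i) > 0" and "g t \<noteq> 0"
    using \<open>(\<Prod>i=1..t. g i) > 0\<close> by (fastforce simp: less_le)+
  show False
  proof (cases "t = d")
    case True
    with repeat \<open>g t \<noteq> 0\<close> show False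
      by (simp add: g_def)
  next
    case False
    have "prod_sum g (Suc t) > 1"
      using prod_sum_gt_one_if_repeated[of g m] \<open>(\<Prod>i=1..m. g i) > 0\<close> tight repeat t
        PS_prod_sum_le_one[of m] assms by (simp add: g_def)
    with PS_prod_sum_le_one[of "Suc t"] False assms show False
      by (simp add: g_def)
  qed
qed

end

end

theorem lemma2p1:
  fixes d :: nat and \<beta> :: "nat \<Rightarrow> real"
  assumes "d \<ge> 1"
    and mono: "\<And>i. 1 \<le> i \<Longrightarrow> i \<le> d \<Longrightarrow> \<beta> i \<ge> \<beta> (i+1)"
    and nonneg: "\<beta> (d+1) \<ge> 0"
    and sum1: "(\<Sum>i=1..d+1. \<beta> i) = 1"
    and ps: "\<And>t. 1 \<le> t \<Longrightarrow> t \<le> d \<Longrightarrow> PS d \<beta> t"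
  shows "(\<forall>t\<in>{1..d+1}. \<beta> t > 0)
    \<and> (\<forall>t\<in>{1..d}. \<beta> t > \<beta> (t+1) \<or> PS_strict d \<beta> t)
    \<and> (\<forall>l\<in>{1..d}. (\<forall>i\<in>{1..l}. PS_eq d \<beta> i) \<longrightarrow>
          (\<forall>i\<in>{1..l}. \<beta> i = 1 / real (sylvester i) + \<beta> (d+1)))"
proof (intro conjI ballI impI)
  note setting = sum1 mono nonneg ps
  show "\<beta> t > 0" if "t \<in> {1..d+1}" for t
    using PS_antimono[OF setting, of t "d+1"] PS_last_pos[OF setting] that by simp
  show "\<beta> t > \<beta> (t+1) \<or> PS_strict d \<beta> t" if "t \<in> {1..d}" for t
    using mono[of t] PS_strict_if_repeated[OF setting, of t] that by force
  show "\<beta> i = 1 / real (sylvester i) + \<beta> (d+1)"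
    if "l \<in> {1..d}" and tight: "\<forall>i\<in>{1..l}. PS_eq d \<beta> i" and "i \<in> {1..l}" for l i
  proof -
    have "prod_sum (\<lambda>i. \<beta> i - \<beta> (d+1)) t = 1" if "1 \<le> t" "t \<le> l" for t
      using tight PS_eq_iff_prod_sum[OF sum1, of t] that \<open>l \<in> {1..d}\<close> by simp
    then have "\<beta> i - \<beta> (d+1) = 1 / real (sylvester i)"
      using prod_sum_eq_one_imp_sylvester[of l "\<lambda>i. \<beta> i - \<beta> (d+1)" i] \<open>i \<in> {1..l}\<close> by simp
    then show ?thesis
      by simp
  qed
qed

end
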